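(* Let $X$, $Y$, $Z$ be Hausdorff locally convex topological vector spaces with topological duals $X^*$, $Y^*$, $Z^*$, and let $C\subseteq Z$ be a closed convex cone with $0\in C\neq Z$. Let $f:X\times Y\to\mathcal{F}(Z,C)$ be a convex function such that $(x_0,0)\in{\rm dom\,} f$ for some $x_0\in X$. Suppose that for every $z^*\in C^-\setminus\{0\}$ the extended real-valued function $y\mapsto\varphi_{(f(x_0,\cdot),z^* )}(y)=\inf_{z\in f(x_0,y)}(-z^*(z))$ is upper semicontinuous at $0\in Y$. Then \[ f_X(0)=\bigcap_{(y^*,z^* )\in Y^*\times (C^-\setminus\{0\})}(-f^* )((0,y^* ),z^* ), \] and there exists a family $\{y^*_{z^*}\colon z^*\in C^-\setminus\{0\},\ \varphi_{(f,z^* )}\text{ is proper}\}\subseteq Y^*$ such that \[ f_X(0)=\bigcap_{\substack{z^*\in C^-\setminus\{0\}\\ \varphi_{(f,z^* )}\text{ is proper}}}(-f^* )((0,y^*_{z^*}),z^* ). \]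
   Context: $\mathcal{F}(Z,C)=\{A\subseteq Z\colon A=\operatorname{cl}(A+C)\}$ (the empty set is included). $C^-=\{z^*\in Z^*\colon z^*(z)\le 0\ \forall z\in C\}$. A function $g:W\to\mathcal{F}(Z,C)$ on a vector space $W$ is convex iff $t g(w_1)+(1-t)g(w_2)\subseteq g(tw_1+(1-t)w_2)$ for all $w_1,w_2\in W$, $t\in(0,1)$ (equivalently, its graph $\{(w,z)\colon z\in g(w)\}$ is convex). ${\rm dom\,} g=\{w\colon g(w)\neq\emptyset\}$. For $z^*\in Z^*$ the scalarization is $\varphi_{(g,z^* )}(w)=\inf_{z\in g(w)}(-z^*(z))\in\mathbb{R}\cup\{\pm\infty\}$ (with $\inf\emptyset=+\infty$); in particular $\varphi_{(f,z^* )}:X\times Y\to\overline{\mathbb{R}}$, and it is proper iff it never takes the value $-\infty$ and is not identically $+\infty$. The marginal function is $f_X(y)=\operatorname{cl}\bigcup_{x\in X}f(x,y)$. The negative conjugate of $f$ is defined for $(x^*,y^* )\in X^*\times Y^*$, $z^*\in C^-\setminus\{0\}$ by $(-f^* )((x^*,y^* ),z^* )=\operatorname{cl}\bigcup_{(x,y)\in X\times Y}\big(f(x,y)+S_{((x^*,y^* ),z^* )}(-x,-y)\big)$, where $S_{((x^*,y^* ),z^* )}(x,y)=\{z\in Z\colon x^*(x)+y^*(y)+z^*(z)\le 0\}$. *)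

theory Defs
  imports "HOL-Analysis.Analysis"
begin

definition lc_hausdorff_tvs :: "'a::real_vector topology \<Rightarrow> bool" where
  "lc_hausdorff_tvs T \<longleftrightarrow>
     topspace T = UNIV \<and> Hausdorff_space T \<and>
     continuous_map (prod_topology T T) T (\<lambda>(x, y). x + y) \<and>
     continuous_map (prod_topology euclideanreal T) T (\<lambda>(a, x). a *\<^sub>R x) \<and>
     (\<forall>U. openin T U \<and> 0 \<in> U \<longrightarrow> (\<exists>V. openin T V \<and> convex V \<and> 0 \<in> V \<and> V \<subseteq> U))"

definition cdual :: "'a::real_vector topology \<Rightarrow> ('a \<Rightarrow> real) set" where
  "cdual T = {l. linear l \<and> continuous_map T euclideanreal l}"

definition msum :: "'a::real_vector set \<Rightarrow> 'a set \<Rightarrow> 'a set" where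
  "msum A B = {a + b | a b. a \<in> A \<and> b \<in> B}"

text \<open>The family F(Z,C) = {A. A = cl(A + C)} (empty set included).\<close>
definition FZC :: "'z::real_vector topology \<Rightarrow> 'z set \<Rightarrow> 'z set set" where
  "FZC T C = {A. A = T closure_of (msum A C)}"

definition neg_dual_cone :: "'z::real_vector topology \<Rightarrow> 'z set \<Rightarrow> ('z \<Rightarrow> real) set" where
  "neg_dual_cone T C = {zs \<in> cdual T. \<forall>z\<in>C. zs z \<le> 0}"

definition setval_convex :: "('w::real_vector \<Rightarrow> 'z::real_vector set) \<Rightarrow> bool" where
  "setval_convex g \<longleftrightarrow> (\<forall>w1 w2 t. 0 < t \<and> t < 1 \<longrightarrow>
      msum ((\<lambda>z. t *\<^sub>R z) ` g w1) ((\<lambda>z. (1 - t) *\<^sub>R z) ` g w2) \<subseteq> g (t *\<^sub>R w1 + (1 - t) *\<^sub>R w2))"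

definition sdom :: "('w \<Rightarrow> 'z set) \<Rightarrow> 'w set" where
  "sdom g = {w. g w \<noteq> {}}"

text \<open>Scalarization phi_(g,z*)(w) = inf_{z in g w} (- z*(z)), with inf {} = +infinity.\<close>
definition scalarization :: "('w \<Rightarrow> 'z set) \<Rightarrow> ('z \<Rightarrow> real) \<Rightarrow> 'w \<Rightarrow> ereal" where
  "scalarization g zs w = Inf ((\<lambda>z. ereal (- zs z)) ` g w)"

definition proper_ext :: "('w \<Rightarrow> ereal) \<Rightarrow> bool" where
  "proper_ext h \<longleftrightarrow> (\<forall>w. h w \<noteq> -\<infinity>) \<and> (\<exists>w. h w \<noteq> \<infinity>)"

definition usc_at :: "'a topology \<Rightarrow> ('a \<Rightarrow> ereal) \<Rightarrow> 'a \<Rightarrow> bool" where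
  "usc_at T h a \<longleftrightarrow> (\<forall>c. h a < c \<longrightarrow> (\<exists>U. openin T U \<and> a \<in> U \<and> (\<forall>y\<in>U. h y < c)))"

definition marginal :: "'z topology \<Rightarrow> ('x \<times> 'y \<Rightarrow> 'z set) \<Rightarrow> 'y \<Rightarrow> 'z set" where
  "marginal T f y = T closure_of (\<Union>x. f (x, y))"

definition Sfun :: "('x \<Rightarrow> real) \<times> ('y \<Rightarrow> real) \<Rightarrow> ('z \<Rightarrow> real) \<Rightarrow> 'x \<times> 'y \<Rightarrow> 'z set" where
  "Sfun xys zs xy = {z. fst xys (fst xy) + snd xys (snd xy) + zs z \<le> 0}"

definition neg_conj :: "'z topology \<Rightarrow> ('x::real_vector \<times> 'y::real_vector \<Rightarrow> 'z::real_vector set)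
     \<Rightarrow> ('x \<Rightarrow> real) \<times> ('y \<Rightarrow> real) \<Rightarrow> ('z \<Rightarrow> real) \<Rightarrow> 'z set" where
  "neg_conj T f xys zs = T closure_of (\<Union>(x, y). msum (f (x, y)) (Sfun xys zs (- x, - y)))"

end

theory Submission
  imports Defs
begin

text \<open>If \<open>u\<close> lies outside the closure of the convex set \<open>B = \<Union>\<^sub>x f(x,0)\<close>, which satisfies
  \<open>B + C \<subseteq> B\<close>, separating \<open>u\<close> from \<open>B\<close> gives \<open>z\<^sup>* \<in> C\<^sup>- - {0}\<close> with \<open>sup z\<^sup>*(B) < z\<^sup>*(u)\<close>.
  The strict epigraph of \<open>y \<mapsto> inf\<^sub>x \<phi>_(f,z\<^sup>*)(x,y)\<close> is convex, misses \<open>(0, -sup z\<^sup>*(B))\<close> and,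
  by upper semicontinuity at \<open>0\<close>, contains a horizontal slice over a neighbourhood of \<open>0\<close>;
  separating in \<open>Y \<times> \<real>\<close> yields \<open>y\<^sup>* \<in> Y\<^sup>*\<close> with \<open>z\<^sup>*(w) + y\<^sup>*(y) \<le> sup z\<^sup>*(B)\<close> whenever
  \<open>w \<in> f(x,y)\<close>. This affine minorant makes \<open>\<phi>_(f,z\<^sup>*)\<close> proper and confines
  \<open>(-f\<^sup>*)((0,y\<^sup>*),z\<^sup>*)\<close> to the half-space \<open>z\<^sup>* \<le> sup z\<^sup>*(B)\<close>, which excludes \<open>u\<close>. The
  reverse inclusions hold because \<open>0 \<in> S_((0,y\<^sup>*),z\<^sup>*)(-x,0)\<close>. Both separations come from the
  Hahn--Banach dominated extension theorem applied to a Minkowski functional.\<close>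

lemma lc_tvs_topspace: "lc_hausdorff_tvs T \<Longrightarrow> topspace T = UNIV"
  by (simp add: lc_hausdorff_tvs_def)

lemma continuous_map_lc_tvs_add:
  assumes "lc_hausdorff_tvs T" "continuous_map X T g" "continuous_map X T h"
  shows "continuous_map X T (\<lambda>x. g x + h x)"
proof -
  have "continuous_map (prod_topology T T) T (\<lambda>(u, v). u + v)"
    using assms(1) by (simp add: lc_hausdorff_tvs_def)
  from continuous_map_compose[OF continuous_map_pairedI[OF assms(2,3)] this]
  show ?thesis by (simp add: o_def)
qed

lemma continuous_map_lc_tvs_scaleR:
  assumes "lc_hausdorff_tvs T" "continuous_map X euclideanreal g" "continuous_map X T h"
  shows "continuous_map X T (\<lambda>x. g x *\<^sub>R h x)"
proof -
  have "continuous_map (prod_topology euclideanreal T) T (\<lambda>(a, v). a *\<^sub>R v)"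
    using assms(1) by (simp add: lc_hausdorff_tvs_def)
  from continuous_map_compose[OF continuous_map_pairedI[OF assms(2,3)] this]
  show ?thesis by (simp add: o_def)
qed

lemma openin_lc_tvs_affine_preimage:
  assumes "lc_hausdorff_tvs T" "openin T W"
  shows "openin T {v. c *\<^sub>R (v - a) \<in> W}"
proof -
  have "continuous_map T T (\<lambda>v. c *\<^sub>R (v + - a))"
    using assms(1) by (intro continuous_map_lc_tvs_scaleR continuous_map_lc_tvs_add)
      (auto simp: lc_tvs_topspace)
  from openin_continuous_map_preimage[OF this assms(2)] show ?thesis
    by (simp add: lc_tvs_topspace[OF assms(1)] flip: diff_conv_add_uminus)
qed

lemma lc_tvs_small_multiples:
  assumes "lc_hausdorff_tvs T" "openin T W" "0 \<in> W"
  obtains e where "e > 0" "\<And>t. \<bar>t\<bar> < e \<Longrightarrow> t *\<^sub>R x \<in> W"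
proof -
  have "continuous_map euclideanreal T (\<lambda>t. t *\<^sub>R x)"
    using assms(1) by (intro continuous_map_lc_tvs_scaleR) (auto simp: lc_tvs_topspace)
  from openin_continuous_map_preimage[OF this assms(2)]
  have "open {t. t *\<^sub>R x \<in> W}" by simp
  moreover have "0 \<in> {t. t *\<^sub>R x \<in> W}" using assms(3) by simp
  ultimately obtain e where "e > 0" "\<And>t. dist t 0 < e \<Longrightarrow> t *\<^sub>R x \<in> W"
    unfolding open_dist by blast
  then show ?thesis by (intro that) auto
qed

lemma linear_continuous_map_if_bounded_near_0:
  fixes l :: "'a::real_vector \<Rightarrow> real"
  assumes T: "lc_hausdorff_tvs T" and l: "linear l"
    and W: "openin T W" "0 \<in> W" and bound: "\<And>v. v \<in> W \<Longrightarrow> \<bar>l v\<bar> \<le> M"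
  shows "continuous_map T euclideanreal l"
  unfolding continuous_map_def
proof (intro conjI allI impI)
  show "l \<in> topspace T \<rightarrow> topspace euclideanreal" by simp
  fix U :: "real set" assume "openin euclideanreal U"
  then have "open U" by simp
  show "openin T {x \<in> topspace T. l x \<in> U}"
  proof (subst openin_subopen, intro ballI)
    fix x assume "x \<in> {x \<in> topspace T. l x \<in> U}"
    then obtain e where e: "e > 0" "\<And>s. dist s (l x) < e \<Longrightarrow> s \<in> U"
      using \<open>open U\<close> unfolding open_dist by auto
    have "M \<ge> 0" using bound[OF W(2)] by simp
    define d where "d = e / (M + 1)"
    have d: "d > 0" "d * M < e" using e \<open>M \<ge> 0\<close> by (auto simp: d_def field_simps)
    define N where "N = {v. (1 / d) *\<^sub>R (v - x) \<in> W}"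
    have "N \<subseteq> {x \<in> topspace T. l x \<in> U}"
    proof
      fix v assume "v \<in> N"
      then have "\<bar>l ((1 / d) *\<^sub>R (v - x))\<bar> \<le> M" using bound by (simp add: N_def)
      moreover have "l ((1 / d) *\<^sub>R (v - x)) = (l v - l x) / d"
        using l by (simp add: linear_scale linear_diff diff_divide_distrib)
      ultimately have "\<bar>l v - l x\<bar> / d \<le> M" using d by simp
      then have "dist (l v) (l x) < e" using d by (simp add: dist_real_def divide_le_eq mult.commute)
      then show "v \<in> {x \<in> topspace T. l x \<in> U}" using e by (simp add: lc_tvs_topspace[OF T])
    qed
    moreover have "openin T N" unfolding N_def by (rule openin_lc_tvs_affine_preimage[OF T W(1)])
    moreover have "x \<in> N" using W(2) by (simp add: N_def)
    ultimately show "\<exists>N. openin T N \<and> x \<in> N \<and> N \<subseteq> {x \<in> topspace T. l x \<in> U}" by blast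
  qed
qed

lemma linear_continuous_map_if_bounded_above_near_0:
  fixes l :: "'a::real_vector \<Rightarrow> real"
  assumes T: "lc_hausdorff_tvs T" and l: "linear l"
    and U: "openin T U" "0 \<in> U" and bound: "\<And>v. v \<in> U \<Longrightarrow> l v \<le> M"
  shows "continuous_map T euclideanreal l"
proof -
  have "openin T {v. - v \<in> U}"
    using openin_lc_tvs_affine_preimage[OF T U(1), of "- 1" 0] by simp
  then have "openin T (U \<inter> {v. - v \<in> U})" using U(1) by (rule openin_Int[rotated])
  moreover have "0 \<in> U \<inter> {v. - v \<in> U}" using U(2) by simp
  moreover have "\<bar>l v\<bar> \<le> M" if "v \<in> U \<inter> {v. - v \<in> U}" for v
    using bound[of v] bound[of "- v"] that l by (auto simp: linear_neg)
  ultimately show ?thesis by (rule linear_continuous_map_if_bounded_near_0[OF T l])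
qed

definition sublinear :: "('a::real_vector \<Rightarrow> real) \<Rightarrow> bool" where
  "sublinear q \<longleftrightarrow> (\<forall>x y. q (x + y) \<le> q x + q y) \<and> (\<forall>c x. c \<ge> 0 \<longrightarrow> q (c *\<^sub>R x) = c * q x)"

lemma sublinear_add_le: "sublinear q \<Longrightarrow> q (x + y) \<le> q x + q y"
  by (simp add: sublinear_def)

lemma sublinear_scaleR: "sublinear q \<Longrightarrow> c \<ge> 0 \<Longrightarrow> q (c *\<^sub>R x) = c * q x"
  by (simp add: sublinear_def)

lemma sublinear_zero: "sublinear q \<Longrightarrow> q 0 = 0"
  using sublinear_scaleR[of q 0 0] by simp

lemma sublinear_uminus_le: "sublinear q \<Longrightarrow> - q (- x) \<le> q x"
  using sublinear_add_le[of q x "- x"] sublinear_zero[of q] by simp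

definition dominated_graph :: "('a::real_vector \<Rightarrow> real) \<Rightarrow> ('a \<times> real) set \<Rightarrow> bool" where
  "dominated_graph q H \<longleftrightarrow> subspace H \<and> (\<forall>r. (0, r) \<in> H \<longrightarrow> r = 0) \<and> (\<forall>(x, r) \<in> H. r \<le> q x)"

lemma dominated_graph_le: "dominated_graph q H \<Longrightarrow> (x, r) \<in> H \<Longrightarrow> r \<le> q x"
  by (auto simp: dominated_graph_def)

lemma dominated_graph_unique:
  assumes "dominated_graph q H" "(x, r) \<in> H" "(x, s) \<in> H"
  shows "r = s"
proof -
  have "(x, r) - (x, s) \<in> H"
    using assms by (intro subspace_diff) (auto simp: dominated_graph_def)
  then show ?thesis using assms(1) by (auto simp: dominated_graph_def)
qed

lemma dominated_graph_span_point:
  assumes "sublinear q"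
  shows "dominated_graph q (span {(w, q w)})"
  unfolding dominated_graph_def
proof (intro conjI allI impI ballI)
  fix r assume "(0, r) \<in> span {(w, q w)}"
  then have "(0, r) \<in> range (\<lambda>k. k *\<^sub>R (w, q w))"
    by (simp add: span_singleton)
  then obtain k where "k *\<^sub>R w = 0" "r = k * q w" by auto
  then show "r = 0" using sublinear_zero[OF assms] by auto
next
  fix p assume "p \<in> span {(w, q w)}"
  then obtain k where p: "p = (k *\<^sub>R w, k * q w)" by (auto simp: span_singleton)
  have "k * q w \<le> q (k *\<^sub>R w)"
  proof (cases "k \<ge> 0")
    case True then show ?thesis using sublinear_scaleR[OF assms] by simp
  next
    case False
    then have "k * q w \<le> (- k) * q (- w)"
      using mult_left_mono_neg[OF sublinear_uminus_le[OF assms, of w], of k] by simp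
    also have "\<dots> = q ((- k) *\<^sub>R (- w))"
      using False by (intro sublinear_scaleR[symmetric, OF assms]) simp
    finally show ?thesis by simp
  qed
  then show "case p of (x, r) \<Rightarrow> r \<le> q x" using p by simp
qed auto

text \<open>The admissible values \<open>a\<close> of a one-dimensional extension to \<open>v\<close> form the interval between
  these two bounds, which is nonempty by subadditivity of \<open>q\<close>.\<close>
lemma dominated_graph_extension_value:
  assumes q: "sublinear q" and H: "dominated_graph q H"
  obtains a where "\<And>x r. (x, r) \<in> H \<Longrightarrow> r - q (x - v) \<le> a"
    and "\<And>y s. (y, s) \<in> H \<Longrightarrow> a \<le> q (y + v) - s"
proof -
  have sH: "subspace H" using H by (simp add: dominated_graph_def)
  have "(0, 0) \<in> H" using subspace_0[OF sH] by (simp add: zero_prod_def)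
  have bounds: "r - q (x - v) \<le> q (y + v) - s" if "(x, r) \<in> H" "(y, s) \<in> H" for x r y s
  proof -
    have "r + s \<le> q (x + y)" using subspace_add[OF sH that] dominated_graph_le[OF H] by simp
    also have "\<dots> \<le> q (x - v) + q (y + v)" using sublinear_add_le[OF q, of "x - v" "y + v"] by simp
    finally show ?thesis by simp
  qed
  define a where "a = Sup {r - q (x - v) | x r. (x, r) \<in> H}"
  show ?thesis
  proof (rule that)
    show "r - q (x - v) \<le> a" if "(x, r) \<in> H" for x r
      unfolding a_def using that bounds[OF _ \<open>(0, 0) \<in> H\<close>]
      by (intro cSup_upper bdd_aboveI[where M = "q v"]) auto
    show "a \<le> q (y + v) - s" if "(y, s) \<in> H" for y s
      unfolding a_def using that \<open>(0, 0) \<in> H\<close> bounds by (intro cSup_least) auto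
  qed
qed

lemma dominated_graph_extend:
  assumes q: "sublinear q" and H: "dominated_graph q H" and v: "v \<notin> fst ` H"
  obtains a where "dominated_graph q (span (insert (v, a) H))"
proof -
  have sH: "subspace H" using H by (simp add: dominated_graph_def)
  obtain a where below: "\<And>x r. (x, r) \<in> H \<Longrightarrow> r - q (x - v) \<le> a"
    and above: "\<And>y s. (y, s) \<in> H \<Longrightarrow> a \<le> q (y + v) - s"
    using dominated_graph_extension_value[OF q H] by blast
  have mem: "p \<in> span (insert (v, a) H) \<longleftrightarrow> (\<exists>k. p - k *\<^sub>R (v, a) \<in> H)" for p
    by (simp add: span_insert span_eq_iff[THEN iffD2, OF sH])
  have "dominated_graph q (span (insert (v, a) H))"
    unfolding dominated_graph_def
  proof (intro conjI allI impI ballI)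
    fix r assume "(0, r) \<in> span (insert (v, a) H)"
    then obtain k where k: "(- (k *\<^sub>R v), r - k * a) \<in> H" by (auto simp: mem)
    have "k = 0"
    proof (rule ccontr)
      assume "k \<noteq> 0"
      then have "(- (1 / k)) *\<^sub>R (- (k *\<^sub>R v), r - k * a) \<in> H" using subspace_scale[OF sH k] by blast
      then have "v \<in> fst ` H" using \<open>k \<noteq> 0\<close> by force
      then show False using v by simp
    qed
    then show "r = 0" using k H by (simp add: dominated_graph_def)
  next
    fix p assume "p \<in> span (insert (v, a) H)"
    then obtain x r k where p: "p = (x, r)" and k: "(x - k *\<^sub>R v, r - k * a) \<in> H"
      by (cases p) (auto simp: mem)
    consider "k = 0" | "k > 0" | "k < 0" by linarith
    then have "r \<le> q x"
    proof cases
      case 1 then show ?thesis using dominated_graph_le[OF H k] by simp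
    next
      case 2
      have "(1 / k) *\<^sub>R (x - k *\<^sub>R v, r - k * a) \<in> H" using subspace_scale[OF sH k] by blast
      from above[of "(1 / k) *\<^sub>R x - v" "r / k - a"] this 2
      have "r / k \<le> q ((1 / k) *\<^sub>R x)" by (simp add: algebra_simps diff_divide_distrib)
      then show ?thesis using 2 sublinear_scaleR[OF q, of "1 / k" x] by (simp add: field_simps)
    next
      case 3
      have "(- 1 / k) *\<^sub>R (x - k *\<^sub>R v, r - k * a) \<in> H" using subspace_scale[OF sH k] by blast
      from below[of "(- 1 / k) *\<^sub>R x + v" "a - r / k"] this 3
      have "- r / k \<le> q ((- 1 / k) *\<^sub>R x)" by (simp add: algebra_simps diff_divide_distrib)
      then show ?thesis using 3 sublinear_scaleR[OF q, of "- 1 / k" x] by (simp add: field_simps)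
    qed
    then show "case p of (x, r) \<Rightarrow> r \<le> q x" using p by simp
  qed simp
  then show ?thesis by (rule that)
qed

lemma dominated_graph_Union_chain:
  assumes "\<C> \<noteq> {}" and dom: "\<And>H. H \<in> \<C> \<Longrightarrow> dominated_graph q H"
    and chain: "\<And>H H'. H \<in> \<C> \<Longrightarrow> H' \<in> \<C> \<Longrightarrow> H \<subseteq> H' \<or> H' \<subseteq> H"
  shows "dominated_graph q (\<Union>\<C>)"
proof -
  have sub: "subspace H" if "H \<in> \<C>" for H using dom[OF that] by (simp add: dominated_graph_def)
  have common: "\<exists>H\<in>\<C>. p \<in> H \<and> p' \<in> H" if "p \<in> \<Union>\<C>" "p' \<in> \<Union>\<C>" for p p'
    using that chain by blast
  have "subspace (\<Union>\<C>)"
    unfolding subspace_def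
  proof (intro conjI ballI allI)
    obtain H where "H \<in> \<C>" using \<open>\<C> \<noteq> {}\<close> by blast
    then show "0 \<in> \<Union>\<C>" using subspace_0[OF sub] by blast
    show "p + p' \<in> \<Union>\<C>" if "p \<in> \<Union>\<C>" "p' \<in> \<Union>\<C>" for p p'
      using common[OF that] subspace_add[OF sub] by blast
    show "c *\<^sub>R p \<in> \<Union>\<C>" if "p \<in> \<Union>\<C>" for c p
      using that subspace_scale[OF sub] by blast
  qed
  then show ?thesis using dom by (auto simp: dominated_graph_def)
qed

lemma total_dominated_graph_exists:
  assumes q: "sublinear q"
  obtains M where "dominated_graph q M" "(w, q w) \<in> M" "\<And>x. x \<in> fst ` M"
proof -
  define A where "A = {H. dominated_graph q H \<and> (w, q w) \<in> H}"
  have "\<exists>M\<in>A. \<forall>H\<in>A. M \<subseteq> H \<longrightarrow> H = M"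
  proof (rule subset_Zorn_nonempty)
    show "A \<noteq> {}" using dominated_graph_span_point[OF q] span_superset unfolding A_def by blast
  next
    fix \<C> assume "\<C> \<noteq> {}" and "subset.chain A \<C>"
    then have "\<C> \<subseteq> A" "\<And>H H'. H \<in> \<C> \<Longrightarrow> H' \<in> \<C> \<Longrightarrow> H \<subseteq> H' \<or> H' \<subseteq> H"
      by (auto simp: subset_chain_def)
    then show "\<Union>\<C> \<in> A"
      using dominated_graph_Union_chain[OF \<open>\<C> \<noteq> {}\<close>] \<open>\<C> \<noteq> {}\<close> unfolding A_def by blast
  qed
  then obtain M where M: "dominated_graph q M" "(w, q w) \<in> M"
    and max: "\<And>H. dominated_graph q H \<Longrightarrow> (w, q w) \<in> H \<Longrightarrow> M \<subseteq> H \<Longrightarrow> H = M"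
    unfolding A_def by blast
  have "x \<in> fst ` M" for x
  proof (rule ccontr)
    assume "x \<notin> fst ` M"
    then obtain a where a: "dominated_graph q (span (insert (x, a) M))"
      using dominated_graph_extend[OF q M(1)] by blast
    have "M \<subseteq> span (insert (x, a) M)" by (auto intro: span_base)
    then have "span (insert (x, a) M) = M" using max[OF a] M(2) by blast
    moreover have "(x, a) \<in> span (insert (x, a) M)" by (simp add: span_base)
    ultimately have "(x, a) \<in> M" by simp
    then show False using \<open>x \<notin> fst ` M\<close> by force
  qed
  then show ?thesis using that M by blast
qed

theorem hahn_banach_sublinear:
  assumes q: "sublinear q"
  obtains l where "linear l" "\<And>x. l x \<le> q x" "l w = q w"
proof -
  obtain M where M: "dominated_graph q M" "(w, q w) \<in> M" and total: "\<And>x. x \<in> fst ` M"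
    using total_dominated_graph_exists[OF q] by blast
  define l where "l x = (THE r. (x, r) \<in> M)" for x
  have l_eq: "l x = r" if "(x, r) \<in> M" for x r
    unfolding l_def
  proof (rule the_equality[where P = "\<lambda>s. (x, s) \<in> M"])
    show "(x, r) \<in> M" by (rule that)
    show "s = r" if "(x, s) \<in> M" for s using dominated_graph_unique[OF M(1) that \<open>(x, r) \<in> M\<close>] .
  qed
  have graph: "(x, l x) \<in> M" for x
  proof -
    obtain r where "(x, r) \<in> M" using total[of x] by auto
    then show ?thesis using l_eq by simp
  qed
  have sM: "subspace M" using M(1) by (simp add: dominated_graph_def)
  have "linear l"
  proof
    show "l (x + y) = l x + l y" for x y
      using l_eq subspace_add[OF sM graph[of x] graph[of y]] by simp
    show "l (c *\<^sub>R x) = c *\<^sub>R l x" for c x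
      using l_eq subspace_scale[OF sM graph[of x], of c] by simp
  qed
  moreover have "l x \<le> q x" for x using dominated_graph_le[OF M(1) graph] .
  moreover have "l w = q w" using l_eq[OF M(2)] .
  ultimately show ?thesis by (rule that)
qed

definition minkowski_functional :: "'a::real_vector set \<Rightarrow> 'a \<Rightarrow> real" where
  "minkowski_functional K x = Inf {t. t > 0 \<and> (1 / t) *\<^sub>R x \<in> K}"

context
  fixes K :: "'a::real_vector set"
  assumes convex: "convex K" and zero: "0 \<in> K" and absorbing: "\<And>x. \<exists>t>0. t *\<^sub>R x \<in> K"
begin

lemma minkowski_functional_le:
  "t > 0 \<Longrightarrow> (1 / t) *\<^sub>R x \<in> K \<Longrightarrow> minkowski_functional K x \<le> t"
  unfolding minkowski_functional_def by (rule cInf_lower) (auto intro: bdd_belowI[where m = 0])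

lemma minkowski_functional_greatest:
  assumes "\<And>t. t > 0 \<Longrightarrow> (1 / t) *\<^sub>R x \<in> K \<Longrightarrow> c \<le> t"
  shows "c \<le> minkowski_functional K x"
proof -
  obtain t where "t > 0" "t *\<^sub>R x \<in> K" using absorbing by blast
  then have "1 / t \<in> {t. t > 0 \<and> (1 / t) *\<^sub>R x \<in> K}" by simp
  then have "{t. t > 0 \<and> (1 / t) *\<^sub>R x \<in> K} \<noteq> {}" by blast
  then show ?thesis
    unfolding minkowski_functional_def by (rule cInf_greatest) (use assms in auto)
qed

lemma minkowski_functional_nonneg: "minkowski_functional K x \<ge> 0"
  by (rule minkowski_functional_greatest) simp

lemma minkowski_functional_le_1: "k \<in> K \<Longrightarrow> minkowski_functional K k \<le> 1"
  using minkowski_functional_le[of 1 k] by simp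

lemma minkowski_functional_ge_1:
  assumes "w \<notin> K"
  shows "minkowski_functional K w \<ge> 1"
proof (rule minkowski_functional_greatest, rule ccontr)
  fix t assume "t > 0" "(1 / t) *\<^sub>R w \<in> K" "\<not> 1 \<le> t"
  then have "t *\<^sub>R ((1 / t) *\<^sub>R w) + (1 - t) *\<^sub>R 0 \<in> K"
    using zero by (intro convexD[OF convex]) auto
  then show False using \<open>t > 0\<close> assms by simp
qed

lemma minkowski_functional_add_le:
  "minkowski_functional K (x + y) \<le> minkowski_functional K x + minkowski_functional K y"
proof -
  have sum: "minkowski_functional K (x + y) \<le> s + t"
    if s: "s > 0" "(1 / s) *\<^sub>R x \<in> K" and t: "t > 0" "(1 / t) *\<^sub>R y \<in> K" for s t
  proof (rule minkowski_functional_le)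
    have "(s / (s + t)) *\<^sub>R ((1 / s) *\<^sub>R x) + (t / (s + t)) *\<^sub>R ((1 / t) *\<^sub>R y) \<in> K"
      using s t by (intro convexD[OF convex]) (auto simp: add_divide_distrib[symmetric])
    moreover have "(s / (s + t)) *\<^sub>R ((1 / s) *\<^sub>R x) + (t / (s + t)) *\<^sub>R ((1 / t) *\<^sub>R y)
        = (1 / (s + t)) *\<^sub>R (x + y)"
      using s t by (simp add: scaleR_add_right)
    ultimately show "(1 / (s + t)) *\<^sub>R (x + y) \<in> K" by simp
  qed (use s t in simp)
  have "minkowski_functional K (x + y) - t \<le> minkowski_functional K x"
    if "t > 0" "(1 / t) *\<^sub>R y \<in> K" for t
    using sum that by (intro minkowski_functional_greatest) (simp add: algebra_simps)
  then have "minkowski_functional K (x + y) - minkowski_functional K x \<le> minkowski_functional K y"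
    by (intro minkowski_functional_greatest) (simp add: algebra_simps)
  then show ?thesis by simp
qed

lemma minkowski_functional_scaleR:
  assumes "c > 0"
  shows "minkowski_functional K (c *\<^sub>R x) = c * minkowski_functional K x"
proof (rule antisym)
  have "minkowski_functional K (c *\<^sub>R x) / c \<le> minkowski_functional K x"
  proof (rule minkowski_functional_greatest)
    fix t assume "t > 0" "(1 / t) *\<^sub>R x \<in> K"
    then have "minkowski_functional K (c *\<^sub>R x) \<le> c * t"
      using assms by (intro minkowski_functional_le) auto
    then show "minkowski_functional K (c *\<^sub>R x) / c \<le> t" using assms by (simp add: divide_le_eq mult.commute)
  qed
  then show "minkowski_functional K (c *\<^sub>R x) \<le> c * minkowski_functional K x"
    using assms by (simp add: divide_le_eq mult.commute)
  show "c * minkowski_functional K x \<le> minkowski_functional K (c *\<^sub>R x)"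
  proof (rule minkowski_functional_greatest)
    fix t assume "t > 0" "(1 / t) *\<^sub>R c *\<^sub>R x \<in> K"
    then have "minkowski_functional K x \<le> t / c"
      using assms by (intro minkowski_functional_le) auto
    then show "c * minkowski_functional K x \<le> t" using assms by (simp add: le_divide_eq mult.commute)
  qed
qed

lemma sublinear_minkowski_functional: "sublinear (minkowski_functional K)"
  unfolding sublinear_def
proof (intro conjI allI impI)
  show "minkowski_functional K (x + y) \<le> minkowski_functional K x + minkowski_functional K y" for x y
    by (rule minkowski_functional_add_le)
  fix c :: real and x assume "c \<ge> 0"
  show "minkowski_functional K (c *\<^sub>R x) = c * minkowski_functional K x"
  proof (cases "c = 0")
    case True
    have "minkowski_functional K 0 \<le> e" if "e > 0" for e
      using minkowski_functional_le[OF that] zero by simp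
    then have "minkowski_functional K 0 \<le> 0" by (rule field_le_epsilon) simp
    then show ?thesis using minkowski_functional_nonneg[of 0] True by simp
  next
    case False
    then show ?thesis using \<open>c \<ge> 0\<close> minkowski_functional_scaleR by simp
  qed
qed

lemma absorbing_convex_separation:
  assumes "w \<notin> K"
  obtains l :: "'a \<Rightarrow> real" where "linear l" "\<And>k. k \<in> K \<Longrightarrow> l k \<le> 1" "l w \<ge> 1"
proof -
  obtain l where l: "linear l" "\<And>x. l x \<le> minkowski_functional K x"
    "l w = minkowski_functional K w"
    using hahn_banach_sublinear[OF sublinear_minkowski_functional] by blast
  show ?thesis
  proof (rule that[OF l(1)])
    show "l k \<le> 1" if "k \<in> K" for k using l(2)[of k] minkowski_functional_le_1[OF that] by simp
    show "l w \<ge> 1" using l(3) minkowski_functional_ge_1[OF assms] by simp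
  qed
qed

end

lemma lc_tvs_closure_separation:
  fixes B :: "'a::real_vector set"
  assumes T: "lc_hausdorff_tvs T" and B: "convex B" "b0 \<in> B" and u: "u \<notin> T closure_of B"
  obtains l m where "linear l" "continuous_map T euclideanreal l" "\<And>b. b \<in> B \<Longrightarrow> l b \<le> m" "m < l u"
proof -
  obtain N where N: "openin T N" "u \<in> N" "N \<inter> B = {}"
    using u by (auto simp: in_closure_of lc_tvs_topspace[OF T])
  have "openin T {v. (- 1) *\<^sub>R (v - u) \<in> N}" by (rule openin_lc_tvs_affine_preimage[OF T N(1)])
  moreover have "0 \<in> {v. (- 1) *\<^sub>R (v - u) \<in> N}" using N(2) by simp
  ultimately obtain V where V: "openin T V" "convex V" "0 \<in> V" "\<And>v. v \<in> V \<Longrightarrow> u - v \<in> N"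
    using T unfolding lc_hausdorff_tvs_def by (auto simp: subset_iff)
  define K where "K = (+) (- b0) ` B + V"
  have K_memI: "b - b0 + v \<in> K" if "b \<in> B" "v \<in> V" for b v
    unfolding K_def using set_plus_intro[OF imageI[OF that(1)] that(2), of "(+) (- b0)"] by simp
  have VK: "V \<subseteq> K" using K_memI[OF B(2)] by auto
  have "convex K"
    unfolding K_def using B(1) V(2) by (intro convex_set_plus convex_translation)
  have "0 \<in> K" using VK V(3) by blast
  have absorbing: "\<exists>t>0. t *\<^sub>R x \<in> V" for x
  proof -
    obtain e where "e > 0" "\<And>t. \<bar>t\<bar> < e \<Longrightarrow> t *\<^sub>R x \<in> V"
      using lc_tvs_small_multiples[OF T V(1,3)] by blast
    then show ?thesis by (intro exI[of _ "e / 2"]) auto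
  qed
  have "u - b0 \<notin> K"
  proof
    assume "u - b0 \<in> K"
    then obtain b v where "b \<in> B" "v \<in> V" "u - b0 = - b0 + b + v"
      unfolding K_def by (auto elim!: set_plus_elim)
    then have "u - v = b" by (simp add: algebra_simps)
    then have "b \<in> N \<inter> B" using V(4)[OF \<open>v \<in> V\<close>] \<open>b \<in> B\<close> by simp
    then show False using N(3) by simp
  qed
  then obtain l :: "'a \<Rightarrow> real" where l: "linear l" "\<And>k. k \<in> K \<Longrightarrow> l k \<le> 1" "l (u - b0) \<ge> 1"
    using absorbing_convex_separation[OF \<open>convex K\<close> \<open>0 \<in> K\<close>] absorbing VK by blast
  obtain s where s: "s > 0" "s *\<^sub>R (u - b0) \<in> V" using absorbing by blast
  show ?thesis
  proof (rule that[OF l(1)])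
    show "continuous_map T euclideanreal l"
      using l VK by (intro linear_continuous_map_if_bounded_above_near_0[OF T l(1) V(1,3)]) auto
    show "l b \<le> l u - s" if "b \<in> B" for b
    proof -
      have "l (b - b0 + s *\<^sub>R (u - b0)) \<le> 1" using l(2) K_memI[OF that s(2)] by simp
      then have "l b - l b0 + s * l (u - b0) \<le> 1" using l(1) by (simp add: linear_add linear_diff linear_scale)
      moreover have "s \<le> s * l (u - b0)" using s(1) l(3) by simp
      moreover have "1 \<le> l u - l b0" using l(1,3) by (simp add: linear_diff)
      ultimately show ?thesis by linarith
    qed
    show "l u - s < l u" using s(1) by simp
  qed
qed

lemma linear_prod_real_split:
  fixes l :: "'a::real_vector \<times> real \<Rightarrow> real"
  assumes l: "linear l"
  shows "linear (\<lambda>y. l (y, 0))" and "l (y, r) = l (y, 0) + r * l (0, 1)"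
proof -
  show "linear (\<lambda>y. l (y, 0))"
  proof
    show "l (x + y, 0) = l (x, 0) + l (y, 0)" for x y
      using linear_add[OF l, of "(x, 0)" "(y, 0)"] by simp
    show "l (a *\<^sub>R x, 0) = a *\<^sub>R l (x, 0)" for a x
      using linear_scale[OF l, of a "(x, 0)"] by simp
  qed
  have "l (y, r) = l ((y, 0) + r *\<^sub>R (0, 1))" by simp
  also have "\<dots> = l (y, 0) + r * l (0, 1)"
    by (simp only: linear_add[OF l] linear_scale[OF l] real_scaleR_def)
  finally show "l (y, r) = l (y, 0) + r * l (0, 1)" .
qed

lemma epigraph_linear_minorant:
  fixes E :: "('a::real_vector \<times> real) set"
  assumes E: "convex E"
    and up: "\<And>y r r'. (y, r) \<in> E \<Longrightarrow> r \<le> r' \<Longrightarrow> (y, r') \<in> E"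
    and slice: "\<And>y. \<exists>e>0. \<forall>t. \<bar>t\<bar> < e \<longrightarrow> (t *\<^sub>R y, c) \<in> E"
    and not_E: "(0, - m) \<notin> E"
  obtains ys where "linear ys" "\<And>y r. (y, r) \<in> E \<Longrightarrow> ys y \<le> r + m"
proof -
  have "(0, c) \<in> E" using slice[of 0] by (auto dest!: spec[where x = 0])
  then have "- m < c" using up[of 0 c "- m"] not_E by force
  define K where "K = (+) (0, - (c + 1)) ` E"
  have K_iff: "(y, r) \<in> K \<longleftrightarrow> (y, r + c + 1) \<in> E" for y r
    unfolding K_def by (force simp: image_iff algebra_simps)
  have "convex K" unfolding K_def by (rule convex_translation[OF E])
  have "0 \<in> K" using K_iff[of 0 0] up[OF \<open>(0, c) \<in> E\<close>, of "c + 1"] by (simp add: zero_prod_def)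
  have absorbing: "\<exists>t>0. t *\<^sub>R p \<in> K" for p
  proof -
    obtain y r where p: "p = (y, r)" by fastforce
    obtain e where e: "e > 0" "\<And>t. \<bar>t\<bar> < e \<Longrightarrow> (t *\<^sub>R y, c) \<in> E" using slice by blast
    define t where "t = min (e / 2) (1 / (\<bar>r\<bar> + 1))"
    have t: "t > 0" "(t *\<^sub>R y, c) \<in> E" using e by (auto simp: t_def)
    have "t * \<bar>r\<bar> \<le> \<bar>r\<bar> / (\<bar>r\<bar> + 1)"
      using mult_right_mono[of t "1 / (\<bar>r\<bar> + 1)" "\<bar>r\<bar>"] by (simp add: t_def)
    also have "\<dots> < 1" by simp
    finally have "c \<le> t * r + c + 1" using t(1) abs_ge_minus_self[of "t * r"] by (simp add: abs_mult)
    then have "(t *\<^sub>R y, t * r + c + 1) \<in> E" using up[OF t(2)] by blast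
    then show ?thesis using t(1) p K_iff by auto
  qed
  have "(0, - m - (c + 1)) \<notin> K" using not_E K_iff by simp
  then obtain l :: "'a \<times> real \<Rightarrow> real"
    where l: "linear l" "\<And>k. k \<in> K \<Longrightarrow> l k \<le> 1" "l (0, - m - (c + 1)) \<ge> 1"
    using absorbing_convex_separation[OF \<open>convex K\<close> \<open>0 \<in> K\<close> absorbing] by blast
  define \<gamma> where "\<gamma> = - l (0, 1)"
  have l_split: "l (y, r) = l (y, 0) - r * \<gamma>" for y r
    using linear_prod_real_split(2)[OF l(1), of y r] by (simp add: \<gamma>_def)
  have "l (0, 0) = 0" using linear_0[OF l(1)] by (simp add: zero_prod_def)
  then have "(m + c + 1) * \<gamma> \<ge> 1" using l(3) l_split[of 0 "- m - (c + 1)"] by (simp add: algebra_simps)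
  moreover have "m + c + 1 > 0" using \<open>- m < c\<close> by simp
  ultimately have "\<gamma> > 0" by (auto simp: zero_less_mult_iff dest: order.strict_trans2[OF zero_less_one])
  then have "1 / \<gamma> \<le> m + c + 1" using \<open>(m + c + 1) * \<gamma> \<ge> 1\<close> by (simp add: divide_le_eq)
  show ?thesis
  proof (rule that)
    show "linear (\<lambda>y. l (y, 0) / \<gamma>)"
      using linear_prod_real_split(1)[OF l(1)] by (simp add: linear_iff add_divide_distrib)
    show "l (y, 0) / \<gamma> \<le> r + m" if "(y, r) \<in> E" for y r
    proof -
      have "l (y, 0) \<le> 1 + (r - c - 1) * \<gamma>"
        using l(2)[of "(y, r - c - 1)"] l_split[of y "r - c - 1"] K_iff that by simp
      then have "l (y, 0) / \<gamma> \<le> (1 + (r - c - 1) * \<gamma>) / \<gamma>"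
        using \<open>\<gamma> > 0\<close> by (intro divide_right_mono) auto
      also have "\<dots> = 1 / \<gamma> + (r - c - 1)" using \<open>\<gamma> > 0\<close> by (simp add: field_simps)
      finally show ?thesis using \<open>1 / \<gamma> \<le> m + c + 1\<close> by simp
    qed
  qed
qed

lemma convex_epigraph_continuous_linear_minorant:
  fixes E :: "('a::real_vector \<times> real) set"
  assumes T: "lc_hausdorff_tvs T" and E: "convex E"
    and up: "\<And>y r r'. (y, r) \<in> E \<Longrightarrow> r \<le> r' \<Longrightarrow> (y, r') \<in> E"
    and U: "openin T U" "0 \<in> U" "\<And>y. y \<in> U \<Longrightarrow> (y, c) \<in> E"
    and not_E: "(0, - m) \<notin> E"
  obtains ys where "linear ys" "continuous_map T euclideanreal ys"
    "\<And>y r. (y, r) \<in> E \<Longrightarrow> ys y \<le> r + m"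
proof -
  have slice: "\<exists>e>0. \<forall>t. \<bar>t\<bar> < e \<longrightarrow> (t *\<^sub>R y, c) \<in> E" for y
    using lc_tvs_small_multiples[OF T U(1,2), of y] U(3) by metis
  obtain ys where ys: "linear ys" "\<And>y r. (y, r) \<in> E \<Longrightarrow> ys y \<le> r + m"
    by (rule epigraph_linear_minorant[OF E _ _ not_E]) (use up slice that in blast)+
  have "continuous_map T euclideanreal ys"
    using ys U by (intro linear_continuous_map_if_bounded_above_near_0[OF T ys(1) U(1,2)]) auto
  with ys that show ?thesis by blast
qed

lemma FZC_add_cone:
  assumes "A \<in> FZC T C" "topspace T = UNIV" "a \<in> A" "c \<in> C"
  shows "a + c \<in> A"
proof -
  have "a + c \<in> msum A C" using assms(3,4) by (auto simp: msum_def)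
  also have "\<dots> \<subseteq> T closure_of msum A C" using assms(2) by (simp add: closure_of_subset)
  finally show ?thesis using assms(1) by (simp add: FZC_def)
qed

lemma setval_convexD:
  assumes "setval_convex g" "w1 \<in> g p1" "w2 \<in> g p2" "0 \<le> a" "0 \<le> b" "a + b = 1"
  shows "a *\<^sub>R w1 + b *\<^sub>R w2 \<in> g (a *\<^sub>R p1 + b *\<^sub>R p2)"
proof (cases "a = 0 \<or> b = 0")
  case True
  then show ?thesis using assms by auto
next
  case False
  then have "0 < a" "a < 1" "b = 1 - a" using assms(4-6) by auto
  then have "a *\<^sub>R w1 + b *\<^sub>R w2 \<in> msum ((\<lambda>z. a *\<^sub>R z) ` g p1) ((\<lambda>z. (1 - a) *\<^sub>R z) ` g p2)"
    using assms(2,3) by (auto simp: msum_def)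
  also have "\<dots> \<subseteq> g (a *\<^sub>R p1 + (1 - a) *\<^sub>R p2)"
    using assms(1) \<open>0 < a\<close> \<open>a < 1\<close> by (simp add: setval_convex_def)
  finally show ?thesis using \<open>b = 1 - a\<close> by simp
qed

lemma convex_Union_section:
  assumes "setval_convex f"
  shows "convex (\<Union>x. f (x, y))"
proof (rule convexI)
  fix p q and a b :: real assume "p \<in> (\<Union>x. f (x, y))" "q \<in> (\<Union>x. f (x, y))" "0 \<le> a" "0 \<le> b" "a + b = 1"
  then obtain x1 x2 where "p \<in> f (x1, y)" "q \<in> f (x2, y)" by blast
  from setval_convexD[OF assms this \<open>0 \<le> a\<close> \<open>0 \<le> b\<close> \<open>a + b = 1\<close>]
  have "a *\<^sub>R p + b *\<^sub>R q \<in> f (a *\<^sub>R x1 + b *\<^sub>R x2, (a + b) *\<^sub>R y)" by (simp add: scaleR_left_distrib)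
  then show "a *\<^sub>R p + b *\<^sub>R q \<in> (\<Union>x. f (x, y))" using \<open>a + b = 1\<close> by auto
qed

text \<open>\<open>(x, y) \<mapsto> ys y - m\<close> is an affine minorant of the scalarization \<open>\<phi>_(f,zs)\<close>.\<close>
definition affine_minorant :: "('x \<times> 'y \<Rightarrow> 'z set) \<Rightarrow> ('z \<Rightarrow> real) \<Rightarrow> ('y \<Rightarrow> real) \<Rightarrow> real \<Rightarrow> bool" where
  "affine_minorant f zs ys m \<longleftrightarrow> (\<forall>x y w. w \<in> f (x, y) \<longrightarrow> zs w + ys y \<le> m)"

lemma proper_scalarization_if_affine_minorant:
  fixes f :: "'x \<times> 'y \<Rightarrow> 'z set"
  assumes "affine_minorant f zs ys m" "p \<in> sdom f"
  shows "proper_ext (scalarization f zs)"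
  unfolding proper_ext_def
proof (intro conjI allI exI)
  fix q :: "'x \<times> 'y"
  obtain x y where q: "q = (x, y)" by fastforce
  have "ereal (ys y - m) \<le> scalarization f zs q"
    unfolding scalarization_def q using assms(1) by (intro Inf_greatest) (force simp: affine_minorant_def)
  then show "scalarization f zs q \<noteq> - \<infinity>" by auto
next
  obtain w where "w \<in> f p" using assms(2) by (auto simp: sdom_def)
  then have "scalarization f zs p \<le> ereal (- zs w)" unfolding scalarization_def by (rule INF_lower)
  then show "scalarization f zs p \<noteq> \<infinity>" by auto
qed

lemma marginal_subset_neg_conj:
  assumes "linear ys" "linear zs"
  shows "marginal T f 0 \<subseteq> neg_conj T f (\<lambda>_. 0, ys) zs"
  unfolding marginal_def neg_conj_def
proof (rule closure_of_mono, rule subsetI)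
  fix w assume "w \<in> (\<Union>x. f (x, 0))"
  then obtain x where "w \<in> f (x, 0)" by blast
  moreover have "0 \<in> Sfun (\<lambda>_. 0, ys) zs (- x, - 0)" using assms by (simp add: Sfun_def linear_0)
  ultimately have "w + 0 \<in> msum (f (x, 0)) (Sfun (\<lambda>_. 0, ys) zs (- x, - 0))"
    unfolding msum_def by blast
  then show "w \<in> (\<Union>(x, y). msum (f (x, y)) (Sfun (\<lambda>_. 0, ys) zs (- x, - y)))"
    by (intro UN_I[where a = "(x, 0)"]) auto
qed

lemma neg_conj_subset_halfspace:
  assumes "topspace T = UNIV" "zs \<in> cdual T" "linear ys" "affine_minorant f zs ys m"
  shows "neg_conj T f (\<lambda>_. 0, ys) zs \<subseteq> {u. zs u \<le> m}"
  unfolding neg_conj_def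
proof (rule closure_of_minimal)
  have "closedin T {u \<in> topspace T. zs u \<in> {..m}}"
    using assms(2) by (intro closedin_continuous_map_preimage) (auto simp: cdual_def)
  then show "closedin T {u. zs u \<le> m}" using assms(1) by simp
  have "zs (w + s) \<le> m" if "w \<in> f (x, y)" "ys (- y) + zs s \<le> 0" for x y w s
  proof -
    have "zs (w + s) = zs w + zs s" using assms(2) by (simp add: cdual_def linear_add)
    also have "\<dots> \<le> zs w + ys y" using that(2) assms(3) by (simp add: linear_neg)
    also have "\<dots> \<le> m" using assms(4) that(1) by (simp add: affine_minorant_def)
    finally show ?thesis .
  qed
  then show "(\<Union>(x, y). msum (f (x, y)) (Sfun (\<lambda>_. 0, ys) zs (- x, - y))) \<subseteq> {u. zs u \<le> m}"
    by (auto simp: msum_def Sfun_def)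
qed

lemma separating_functional_in_neg_dual_cone:
  assumes T: "lc_hausdorff_tvs T" and B: "convex B" "b0 \<in> B"
    and B_add_C: "\<And>b c. b \<in> B \<Longrightarrow> c \<in> C \<Longrightarrow> b + c \<in> B" and C: "cone C"
    and u: "u \<notin> T closure_of B"
  obtains l where "l \<in> neg_dual_cone T C - {\<lambda>_. 0}" "bdd_above (l ` B)" "Sup (l ` B) < l u"
proof -
  obtain l m where l: "linear l" "continuous_map T euclideanreal l"
    and le_m: "\<And>b. b \<in> B \<Longrightarrow> l b \<le> m" and "m < l u"
    using lc_tvs_closure_separation[OF T B u] by blast
  have "Sup (l ` B) \<le> m" using B(2) le_m by (intro cSup_least) auto
  txt \<open>Since \<open>B + C \<subseteq> B\<close>, a functional bounded above on \<open>B\<close> is nonpositive on the cone \<open>C\<close>.\<close>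
  have "l c \<le> 0" if "c \<in> C" for c
  proof (rule ccontr)
    assume "\<not> l c \<le> 0"
    define t where "t = (l u - l b0) / l c"
    have "t \<ge> 0" using le_m[OF B(2)] \<open>m < l u\<close> \<open>\<not> l c \<le> 0\<close> by (simp add: t_def)
    then have "b0 + t *\<^sub>R c \<in> B" using B_add_C[OF B(2)] C that by (simp add: cone_def)
    moreover have "l (b0 + t *\<^sub>R c) = l u"
      using l(1) \<open>\<not> l c \<le> 0\<close> by (simp add: linear_add linear_scale t_def)
    ultimately show False using le_m \<open>m < l u\<close> by fastforce
  qed
  moreover have "l \<noteq> (\<lambda>_. 0)" using le_m[OF B(2)] \<open>m < l u\<close> by auto
  ultimately have "l \<in> neg_dual_cone T C - {\<lambda>_. 0}"
    using l by (simp add: neg_dual_cone_def cdual_def)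
  moreover have "bdd_above (l ` B)" using le_m by (rule bdd_aboveI2)
  ultimately show ?thesis using that \<open>Sup (l ` B) \<le> m\<close> \<open>m < l u\<close> by force
qed

text \<open>The strict epigraph of \<open>y \<mapsto> inf\<^sub>x \<phi>_(f,l) (x, y)\<close> is convex, misses \<open>(0, -m)\<close>,
  and by upper semicontinuity contains a horizontal slice over a neighbourhood of \<open>0\<close>.\<close>
lemma affine_minorant_exists:
  fixes f :: "'x::real_vector \<times> 'y::real_vector \<Rightarrow> 'z::real_vector set"
  assumes T: "lc_hausdorff_tvs T" and f: "setval_convex f" and l: "linear l"
    and w0: "w0 \<in> f (x0, 0)" and usc: "usc_at T (scalarization (\<lambda>y. f (x0, y)) l) 0"
    and le_m: "\<And>x w. w \<in> f (x, 0) \<Longrightarrow> l w \<le> m"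
  obtains ys where "ys \<in> cdual T" "affine_minorant f l ys m"
proof -
  define E where "E = {(y, r). \<exists>x w. w \<in> f (x, y) \<and> - l w < r}"
  have "convex E"
  proof (rule convexI)
    fix p q and a b :: real
    assume "p \<in> E" "q \<in> E" and ab: "0 \<le> a" "0 \<le> b" "a + b = 1"
    then obtain y1 r1 x1 w1 y2 r2 x2 w2 where
      1: "p = (y1, r1)" "w1 \<in> f (x1, y1)" "- l w1 < r1" and
      2: "q = (y2, r2)" "w2 \<in> f (x2, y2)" "- l w2 < r2"
      unfolding E_def by auto
    have "- l (a *\<^sub>R w1 + b *\<^sub>R w2) = a * - l w1 + b * - l w2"
      using l by (simp add: linear_add linear_scale)
    also have "\<dots> < a * r1 + b * r2"
    proof (cases "a = 0")
      case True
      then show ?thesis using ab 2(3) by simp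
    next
      case False
      then have "a * - l w1 < a * r1" using ab(1) 1(3) by (intro mult_strict_left_mono) auto
      moreover have "b * - l w2 \<le> b * r2" using ab(2) 2(3) by (intro mult_left_mono) auto
      ultimately show ?thesis by linarith
    qed
    finally show "a *\<^sub>R p + b *\<^sub>R q \<in> E"
      using setval_convexD[OF f 1(2) 2(2) ab] 1(1) 2(1) unfolding E_def by auto
  qed
  have up: "(y, r') \<in> E" if "(y, r) \<in> E" "r \<le> r'" for y r r'
    using that unfolding E_def by force
  have "scalarization (\<lambda>y. f (x0, y)) l 0 \<le> ereal (- l w0)"
    unfolding scalarization_def using w0 by (intro INF_lower) auto
  then have "scalarization (\<lambda>y. f (x0, y)) l 0 < ereal (- l w0 + 1)" by (rule le_less_trans) simp
  with usc obtain U where U: "openin T U" "0 \<in> U"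
    and U_lt: "\<And>y. y \<in> U \<Longrightarrow> scalarization (\<lambda>y. f (x0, y)) l y < ereal (- l w0 + 1)"
    unfolding usc_at_def by meson
  have U_E: "(y, - l w0 + 1) \<in> E" if y: "y \<in> U" for y
  proof -
    obtain w where "w \<in> f (x0, y)" "ereal (- l w) < ereal (- l w0 + 1)"
      using U_lt[OF y] unfolding scalarization_def Inf_less_iff by blast
    then show ?thesis unfolding E_def by auto
  qed
  have "(0, - m) \<notin> E" using le_m unfolding E_def by force
  obtain ys where ys: "linear ys" "continuous_map T euclideanreal ys"
    and below: "\<And>y r. (y, r) \<in> E \<Longrightarrow> ys y \<le> r + m"
    by (rule convex_epigraph_continuous_linear_minorant[OF T \<open>convex E\<close> _ U U_E \<open>(0, - m) \<notin> E\<close>])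
      (use up that in blast)+
  have "l w + ys y \<le> m" if w: "w \<in> f (x, y)" for x y w
  proof -
    have "ys y \<le> - l w + m + e" if "e > 0" for e
    proof -
      have "(y, - l w + e) \<in> E" using w \<open>e > 0\<close> unfolding E_def by force
      from below[OF this] show ?thesis by simp
    qed
    then have "ys y \<le> - l w + m" by (rule field_le_epsilon)
    then show ?thesis by simp
  qed
  then have "affine_minorant f l ys m" by (simp add: affine_minorant_def)
  then show ?thesis using that ys by (simp add: cdual_def)
qed

lemma outside_marginal_separation:
  fixes f :: "'x::real_vector \<times> 'y::real_vector \<Rightarrow> 'z::real_vector set"
  assumes TY: "lc_hausdorff_tvs TY" and TZ: "lc_hausdorff_tvs TZ" and C: "cone C"
    and f_FZC: "\<forall>w. f w \<in> FZC TZ C" and f: "setval_convex f" and dom: "(x0, 0) \<in> sdom f"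
    and usc: "\<forall>zs \<in> neg_dual_cone TZ C - {\<lambda>_. 0}. usc_at TY (scalarization (\<lambda>y. f (x0, y)) zs) 0"
    and u: "u \<notin> marginal TZ f 0"
  obtains zs ys where "zs \<in> neg_dual_cone TZ C - {\<lambda>_. 0}" "ys \<in> cdual TY"
    "affine_minorant f zs ys (Sup (zs ` (\<Union>x. f (x, 0))))" "Sup (zs ` (\<Union>x. f (x, 0))) < zs u"
proof -
  define B where "B = (\<Union>x. f (x, 0))"
  obtain w0 where w0: "w0 \<in> f (x0, 0)" using dom by (auto simp: sdom_def)
  have "convex B" unfolding B_def by (rule convex_Union_section[OF f])
  have "w0 \<in> B" using w0 unfolding B_def by blast
  have B_add_C: "b + c \<in> B" if "b \<in> B" "c \<in> C" for b c
    using that FZC_add_cone[OF spec[OF f_FZC] lc_tvs_topspace[OF TZ]] unfolding B_def by blast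
  have "u \<notin> TZ closure_of B" using u by (simp add: marginal_def B_def)
  then obtain zs where zs: "zs \<in> neg_dual_cone TZ C - {\<lambda>_. 0}" "bdd_above (zs ` B)" "Sup (zs ` B) < zs u"
    using separating_functional_in_neg_dual_cone[OF TZ \<open>convex B\<close> \<open>w0 \<in> B\<close> B_add_C C] by metis
  have "zs w \<le> Sup (zs ` B)" if "w \<in> f (x, 0)" for x w
    using zs(2) that by (intro cSup_upper) (auto simp: B_def)
  moreover have "linear zs" using zs(1) by (simp add: neg_dual_cone_def cdual_def)
  moreover have "usc_at TY (scalarization (\<lambda>y. f (x0, y)) zs) 0" using usc zs(1) by blast
  ultimately obtain ys where "ys \<in> cdual TY" "affine_minorant f zs ys (Sup (zs ` B))"
    using affine_minorant_exists[OF TY f _ w0] by metis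
  then show ?thesis using that zs unfolding B_def by blast
qed

lemma marginal_supset_Inter_neg_conj:
  fixes f :: "'x::real_vector \<times> 'y::real_vector \<Rightarrow> 'z::real_vector set"
  assumes TY: "lc_hausdorff_tvs TY" and TZ: "lc_hausdorff_tvs TZ" and C: "cone C"
    and f_FZC: "\<forall>w. f w \<in> FZC TZ C" and f: "setval_convex f" and dom: "(x0, 0) \<in> sdom f"
    and usc: "\<forall>zs \<in> neg_dual_cone TZ C - {\<lambda>_. 0}. usc_at TY (scalarization (\<lambda>y. f (x0, y)) zs) 0"
  obtains yfam :: "('z \<Rightarrow> real) \<Rightarrow> 'y \<Rightarrow> real"
  where "\<And>zs. yfam zs \<in> cdual TY"
    and "\<And>u. (\<And>zs. zs \<in> neg_dual_cone TZ C - {\<lambda>_. 0} \<Longrightarrow> proper_ext (scalarization f zs) \<Longrightarrow>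
                 u \<in> neg_conj TZ f (\<lambda>_. 0, yfam zs) zs) \<Longrightarrow> u \<in> marginal TZ f 0"
proof -
  define M where "M zs = Sup (zs ` (\<Union>x. f (x, 0)))" for zs :: "'z \<Rightarrow> real"
  have "(\<lambda>_. 0) \<in> cdual TY" by (simp add: cdual_def linear_zero)
  then have "\<forall>zs. \<exists>ys. ys \<in> cdual TY \<and>
      ((\<exists>ys' \<in> cdual TY. affine_minorant f zs ys' (M zs)) \<longrightarrow> affine_minorant f zs ys (M zs))"
    by blast
  from choice[OF this] obtain yfam where yfam: "\<And>zs. yfam zs \<in> cdual TY"
    "\<And>zs. \<exists>ys \<in> cdual TY. affine_minorant f zs ys (M zs) \<Longrightarrow> affine_minorant f zs (yfam zs) (M zs)"
    by blast
  show ?thesis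
  proof (rule that[OF yfam(1)])
    fix u
    assume u: "\<And>zs. zs \<in> neg_dual_cone TZ C - {\<lambda>_. 0} \<Longrightarrow> proper_ext (scalarization f zs) \<Longrightarrow>
                 u \<in> neg_conj TZ f (\<lambda>_. 0, yfam zs) zs"
    show "u \<in> marginal TZ f 0"
    proof (rule ccontr)
      assume "u \<notin> marginal TZ f 0"
      then obtain zs ys where zs: "zs \<in> neg_dual_cone TZ C - {\<lambda>_. 0}" "M zs < zs u"
        and "ys \<in> cdual TY" "affine_minorant f zs ys (M zs)"
        using outside_marginal_separation[OF TY TZ C f_FZC f dom usc] unfolding M_def by metis
      then have minorant: "affine_minorant f zs (yfam zs) (M zs)" using yfam(2) by blast
      have "zs \<in> cdual TZ" using zs(1) by (simp add: neg_dual_cone_def)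
      have "linear (yfam zs)" using yfam(1) by (simp add: cdual_def)
      have "u \<in> neg_conj TZ f (\<lambda>_. 0, yfam zs) zs"
        using u[OF zs(1) proper_scalarization_if_affine_minorant[OF minorant dom]] .
      then have "zs u \<le> M zs"
        using neg_conj_subset_halfspace[OF lc_tvs_topspace[OF TZ] \<open>zs \<in> cdual TZ\<close> \<open>linear (yfam zs)\<close> minorant]
        by blast
      then show False using zs(2) by simp
    qed
  qed
qed

theorem mainTheorem1:
  fixes TX :: "'x::real_vector topology" and TY :: "'y::real_vector topology"
    and TZ :: "'z::real_vector topology"
    and C :: "'z set" and f :: "'x \<times> 'y \<Rightarrow> 'z set" and x0 :: 'x
  assumes "lc_hausdorff_tvs TX" and "lc_hausdorff_tvs TY" and "lc_hausdorff_tvs TZ"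
    and "closedin TZ C" and "convex C" and "cone C" and "0 \<in> C" and "C \<noteq> UNIV"
    and "\<forall>w. f w \<in> FZC TZ C"
    and "setval_convex f"
    and "(x0, 0) \<in> sdom f"
    and "\<forall>zs \<in> neg_dual_cone TZ C - {\<lambda>_. 0}.
           usc_at TY (scalarization (\<lambda>y. f (x0, y)) zs) 0"
  shows "marginal TZ f 0 =
           (\<Inter>ys \<in> cdual TY. \<Inter>zs \<in> neg_dual_cone TZ C - {\<lambda>_. 0}.
              neg_conj TZ f (\<lambda>_. 0, ys) zs)
       \<and> (\<exists>yfam :: ('z \<Rightarrow> real) \<Rightarrow> ('y \<Rightarrow> real).
           (\<forall>zs \<in> {zs \<in> neg_dual_cone TZ C - {\<lambda>_. 0}. proper_ext (scalarization f zs)}.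
               yfam zs \<in> cdual TY)
         \<and> marginal TZ f 0 =
             (\<Inter>zs \<in> {zs \<in> neg_dual_cone TZ C - {\<lambda>_. 0}. proper_ext (scalarization f zs)}.
                neg_conj TZ f (\<lambda>_. 0, yfam zs) zs))"
proof -
  obtain yfam where yfam: "\<And>zs. yfam zs \<in> cdual TY"
    and lower: "\<And>u. (\<And>zs. zs \<in> neg_dual_cone TZ C - {\<lambda>_. 0} \<Longrightarrow> proper_ext (scalarization f zs) \<Longrightarrow>
                 u \<in> neg_conj TZ f (\<lambda>_. 0, yfam zs) zs) \<Longrightarrow> u \<in> marginal TZ f 0"
    using marginal_supset_Inter_neg_conj[OF assms(2,3,6,9,10,11,12)] by blast
  have upper: "marginal TZ f 0 \<subseteq> neg_conj TZ f (\<lambda>_. 0, ys) zs"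
    if "ys \<in> cdual TY" "zs \<in> neg_dual_cone TZ C" for ys zs
    using that by (intro marginal_subset_neg_conj) (auto simp: cdual_def neg_dual_cone_def)
  have "marginal TZ f 0 = (\<Inter>ys \<in> cdual TY. \<Inter>zs \<in> neg_dual_cone TZ C - {\<lambda>_. 0}.
      neg_conj TZ f (\<lambda>_. 0, ys) zs)"
    using upper lower yfam by (intro equalityI subsetI) blast+
  moreover have "marginal TZ f 0 = (\<Inter>zs \<in> {zs \<in> neg_dual_cone TZ C - {\<lambda>_. 0}.
      proper_ext (scalarization f zs)}. neg_conj TZ f (\<lambda>_. 0, yfam zs) zs)"
    using upper lower yfam by (intro equalityI subsetI) blast+
  ultimately show ?thesis using yfam by blast
qed

end
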